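(* Let $B>0$, and let $U:\mathbb{R}^3\to[0,\infty[$ with $U\in\mathrm{L}^1(\mathbb{R}^3)\cap\mathrm{L}^2(\mathbb{R}^3)$ satisfy $\lim_{|x|\to\infty}\|(|x_\perp|^\alpha,|x_3|^\gamma)\|_{2/\beta}\,U(x_\perp,x_3)=g$ for constants $g>0$, $\alpha>2$, $\beta>0$, $\alpha/(\alpha-2)<\gamma<3\alpha/(\alpha-2)$. Let $u(x):=g\,\big(|x_\perp|^{2\alpha/\beta}+|x_3|^{2\gamma/\beta}\big)^{-\beta/2}$ for $x\neq0$. Let $\varphi\in\mathcal{C}_c^\infty(\mathbb{R})$ be real-valued with $\int_{\mathbb{R}}|\varphi(s)|^2ds=1$ and $\int_{\mathbb{R}}s|\varphi(s)|^2ds=0$, let $0\le\sigma<1/\gamma$, and for $t>0$ define \[ \psi_t(x):=\sqrt{\tfrac{B}{2\pi}}\,e^{-\frac B4|x_\perp|^2}\,t^{-\sigma/2}\,\varphi\!\left(\tfrac{x_3}{t^\sigma}\right),\qquad \delta_t(x):=t^{\frac2\alpha+\frac1\gamma}\left|\psi_t\!\left(t^{\frac1\alpha}x_\perp,t^{\frac1\gamma}x_3\right)\right|^2 . \] Then for every $x\in\mathbb{R}^3\setminus\{0\}$, \[ \limsup_{t\to\infty}\,t\int_{\mathbb{R}^3}dy\,\delta_t(x-y)\,U\!\left(t^{\frac1\alpha}y_\perp,t^{\frac1\gamma}y_3\right)\le u(x). \]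
   Context: Notation: for $x=(x_1,x_2,x_3)\in\mathbb{R}^3$, $x_\perp:=(x_1,x_2)$; for $c=(c_1,c_2)\in\mathbb{R}^2$, $\|c\|_{2/\beta}:=(|c_1|^{2/\beta}+|c_2|^{2/\beta})^{\beta/2}$. Each $\delta_t$ is a probability density on $\mathbb{R}^3$. *)

theory Defs
  imports "HOL-Analysis.Analysis"
begin

definition perp_norm :: "real^3 \<Rightarrow> real" where
  "perp_norm x = sqrt ((x$1)^2 + (x$2)^2)"

definition aniso_scale :: "real \<Rightarrow> real \<Rightarrow> real^3 \<Rightarrow> real^3" where
  "aniso_scale a c x = (\<chi> i. if i = 3 then c * x$i else a * x$i)"

definition pnorm2 :: "real \<Rightarrow> real \<Rightarrow> real \<Rightarrow> real" where
  "pnorm2 \<beta> c1 c2 = (\<bar>c1\<bar> powr (2/\<beta>) + \<bar>c2\<bar> powr (2/\<beta>)) powr (\<beta>/2)"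

definition smooth_real :: "(real \<Rightarrow> real) \<Rightarrow> bool" where
  "smooth_real f \<longleftrightarrow> (\<forall>n. \<forall>x. ((deriv ^^ n) f) differentiable (at x))"

definition compact_support :: "(real \<Rightarrow> real) \<Rightarrow> bool" where
  "compact_support f \<longleftrightarrow> compact (closure {s. f s \<noteq> 0})"

definition psi :: "real \<Rightarrow> real \<Rightarrow> (real \<Rightarrow> real) \<Rightarrow> real \<Rightarrow> real^3 \<Rightarrow> real" where
  "psi B \<sigma> \<phi> t x = sqrt (B / (2*pi)) * exp (- (B/4) * (perp_norm x)^2)
      * t powr (-\<sigma>/2) * \<phi> (x$3 / t powr \<sigma>)"

definition delta :: "real \<Rightarrow> real \<Rightarrow> real \<Rightarrow> real \<Rightarrow> (real \<Rightarrow> real) \<Rightarrow> real \<Rightarrow> real^3 \<Rightarrow> real" where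
  "delta \<alpha> \<gamma> B \<sigma> \<phi> t x = t powr (2/\<alpha> + 1/\<gamma>)
      * \<bar>psi B \<sigma> \<phi> t (aniso_scale (t powr (1/\<alpha>)) (t powr (1/\<gamma>)) x)\<bar>^2"

definition u_lim :: "real \<Rightarrow> real \<Rightarrow> real \<Rightarrow> real \<Rightarrow> real^3 \<Rightarrow> real" where
  "u_lim g \<alpha> \<beta> \<gamma> x = g * ((perp_norm x) powr (2*\<alpha>/\<beta>) + \<bar>x$3\<bar> powr (2*\<gamma>/\<beta>)) powr (-\<beta>/2)"

end

(*
  Write P y = ||(|y_perp|^alpha, |y_3|^gamma)||_{2/beta} and S_t for the dilation
  y |-> (t^(1/alpha) y_perp, t^(1/gamma) y_3).  Then u = g / P and P (S_t y) = t P y,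
  while delta_t (x - .) is a probability density because psi_t is L^2-normalised.
  On a small ball around x /= 0 the points S_t y escape to infinity uniformly, so
  t U (S_t y) = (P U)(S_t y) / P y <= (g + eta) / P y, which is close to u x.
  Off that ball delta_t is uniformly negligible: either |z_3| >= r/2 and the compactly
  supported phi vanishes since t^(1/gamma - sigma) -> oo, or the Gaussian factor is at
  most exp (-B r^2 t^(2/alpha) / 8).  As the integral of U o S_t is t^(-2/alpha-1/gamma)
  times that of U, this part contributes o(1/t).
*)
theory Submission
  imports Defs "HOL-Probability.Probability" "HOL-Real_Asymp.Real_Asymp"
begin

section \<open>Anisotropic dilations of real^3\<close>

lemma aniso_scale_nth [simp]:
  "aniso_scale a c y $ 1 = a * y $ 1" "aniso_scale a c y $ 2 = a * y $ 2"
  "aniso_scale a c y $ 3 = c * y $ 3"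
  by (auto simp: aniso_scale_def)

lemma norm_vec3: "norm (y :: real^3) = sqrt ((y$1)\<^sup>2 + (y$2)\<^sup>2 + (y$3)\<^sup>2)"
  by (simp add: norm_vec_def L2_set_def sum_3)

lemma perp_norm_nonneg: "perp_norm y \<ge> 0"
  by (simp add: perp_norm_def)

lemma perp_norm_aniso_scale: "perp_norm (aniso_scale a c y) = \<bar>a\<bar> * perp_norm y"
  by (simp add: perp_norm_def power_mult_distrib real_sqrt_mult flip: distrib_left)

lemma norm_aniso_scale_ge: "min \<bar>a\<bar> \<bar>c\<bar> * norm y \<le> norm (aniso_scale a c y)"
proof (rule power2_le_imp_le)
  let ?m = "min \<bar>a\<bar> \<bar>c\<bar>"
  have "?m\<^sup>2 \<le> a\<^sup>2" "?m\<^sup>2 \<le> c\<^sup>2"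
    by (auto simp: min_def abs_le_square_iff)
  then have "?m\<^sup>2 * ((y$1)\<^sup>2 + (y$2)\<^sup>2 + (y$3)\<^sup>2) \<le> a\<^sup>2 * (y$1)\<^sup>2 + a\<^sup>2 * (y$2)\<^sup>2 + c\<^sup>2 * (y$3)\<^sup>2"
    unfolding distrib_left by (intro add_mono mult_right_mono) auto
  then show "(?m * norm y)\<^sup>2 \<le> (norm (aniso_scale a c y))\<^sup>2"
    by (simp add: norm_vec3 power_mult_distrib)
qed simp

lemma Basis_vec3: "(Basis :: (real^3) set) = {axis 1 1, axis 2 1, axis 3 1}"
  by (auto simp: Basis_vec_def UNIV_3)

lemma axis3_distinct: "axis (1::3) (1::real) \<noteq> axis 2 1" "axis (1::3) (1::real) \<noteq> axis 3 1"
  "axis (2::3) (1::real) \<noteq> axis 3 1"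
  by (auto simp: axis_eq_axis)

lemma aniso_scale_eq_sum_Basis:
  "aniso_scale a c x = (\<Sum>j\<in>Basis. ((if j = axis 3 1 then c else a) * (x \<bullet> j)) *\<^sub>R j)"
proof -
  have "(\<Sum>j\<in>Basis. ((if j = axis 3 1 then c else a) * (x \<bullet> j)) *\<^sub>R j)
      = (a * x$1) *\<^sub>R axis 1 1 + ((a * x$2) *\<^sub>R axis 2 1 + (c * x$3) *\<^sub>R axis 3 (1::real))"
    unfolding Basis_vec3 using axis3_distinct by (simp add: inner_axis)
  also have "\<dots> = aniso_scale a c x"
    by (simp add: vec_eq_iff forall_3 aniso_scale_def axis_def)
  finally show ?thesis ..
qed

lemma measurable_aniso_scale [measurable]: "aniso_scale a c \<in> borel_measurable borel"
  unfolding aniso_scale_eq_sum_Basis[abs_def] by measurable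

section \<open>Lebesgue integrals on real^3\<close>

lemma nn_integral_aniso_scale:
  fixes f :: "real^3 \<Rightarrow> ennreal"
  assumes [measurable]: "f \<in> borel_measurable borel" and "a \<noteq> 0" "c \<noteq> 0"
  shows "(\<integral>\<^sup>+y. f y \<partial>lborel) = ennreal (a\<^sup>2 * \<bar>c\<bar>) * (\<integral>\<^sup>+y. f (aniso_scale a c y) \<partial>lborel)"
proof -
  have "lborel = density (distr lborel borel (\<lambda>x::real^3. 0 + (\<Sum>j\<in>Basis. ((if j = axis 3 1 then c else a) * (x \<bullet> j)) *\<^sub>R j)))
      (\<lambda>_. (\<Prod>j::real^3\<in>Basis. \<bar>if j = axis 3 1 then c else a\<bar>))"
    by (rule lborel_affine_euclidean) (use assms in auto)
  also have "(\<Prod>j::real^3\<in>Basis. \<bar>if j = axis 3 1 then c else a\<bar>) = a\<^sup>2 * \<bar>c\<bar>"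
    unfolding Basis_vec3 using axis3_distinct by (simp add: power2_eq_square)
  finally have lborel_eq: "lborel = density (distr lborel borel (aniso_scale a c)) (\<lambda>_. ennreal (a\<^sup>2 * \<bar>c\<bar>))"
    by (simp add: aniso_scale_eq_sum_Basis[abs_def])
  have "(\<integral>\<^sup>+y. f y \<partial>lborel) = (\<integral>\<^sup>+y. f y \<partial>density (distr lborel borel (aniso_scale a c)) (\<lambda>_. ennreal (a\<^sup>2 * \<bar>c\<bar>)))"
    using lborel_eq by (rule arg_cong)
  then show ?thesis
    by (simp add: nn_integral_density nn_integral_distr nn_integral_cmult)
qed

lemma has_bochner_integral_aniso_scale:
  fixes U :: "real^3 \<Rightarrow> real"
  assumes "has_bochner_integral lborel U I" "\<And>y. 0 \<le> U y" "a \<noteq> 0" "c \<noteq> 0"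
  shows "has_bochner_integral lborel (\<lambda>y. U (aniso_scale a c y)) (I / (a\<^sup>2 * \<bar>c\<bar>))"
proof -
  have [measurable]: "U \<in> borel_measurable borel"
    using assms(1) by (auto simp: has_bochner_integral_iff dest: borel_measurable_integrable)
  have "I \<ge> 0"
    using has_bochner_integral_integral_eq[OF assms(1), symmetric] assms(2) by (simp add: integral_nonneg)
  let ?X = "\<integral>\<^sup>+y. U (aniso_scale a c y) \<partial>lborel"
  have "ennreal I = (\<integral>\<^sup>+y. U y \<partial>lborel)"
    using assms(1,2) by (simp add: has_bochner_integral_iff nn_integral_eq_integral)
  also have "\<dots> = ?X * ennreal (a\<^sup>2 * \<bar>c\<bar>)"
    by (subst nn_integral_aniso_scale[OF _ assms(3,4)]) (measurable, simp add: mult.commute)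
  finally have "ennreal I / ennreal (a\<^sup>2 * \<bar>c\<bar>) = ?X"
    using assms(3,4) by (simp add: ennreal_mult_divide_eq)
  then have "?X = ennreal (I / (a\<^sup>2 * \<bar>c\<bar>))"
    using assms(3,4) \<open>I \<ge> 0\<close> by (simp add: divide_ennreal)
  then show ?thesis
    using assms(2) \<open>I \<ge> 0\<close> by (intro has_bochner_integral_nn_integral) auto
qed

lemma nn_integral_reflect_translate:
  fixes f :: "'a::euclidean_space \<Rightarrow> ennreal"
  assumes [measurable]: "f \<in> borel_measurable borel"
  shows "(\<integral>\<^sup>+y. f (x - y) \<partial>lborel) = (\<integral>\<^sup>+y. f y \<partial>lborel)"
proof -
  have lborel_eq: "lborel = distr lborel borel (\<lambda>y. x - y)"
    using lborel_affine[of "-1" x] by (simp add: density_1)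
  have "(\<integral>\<^sup>+y. f (x - y) \<partial>lborel) = (\<integral>\<^sup>+y. f y \<partial>distr lborel borel ((-) x))"
    by (simp add: nn_integral_distr)
  also have "\<dots> = (\<integral>\<^sup>+y. f y \<partial>lborel)"
    using lborel_eq by simp
  finally show ?thesis .
qed

lemma nn_integral_vec3_prod:
  fixes f1 f2 f3 :: "real \<Rightarrow> real"
  assumes [measurable]: "f1 \<in> borel_measurable borel" "f2 \<in> borel_measurable borel" "f3 \<in> borel_measurable borel"
    and "\<And>s. f1 s \<ge> 0" "\<And>s. f2 s \<ge> 0" "\<And>s. f3 s \<ge> 0"
  shows "(\<integral>\<^sup>+y. ennreal (f1 ((y::real^3)$1) * f2 (y$2) * f3 (y$3)) \<partial>lborel)
     = (\<integral>\<^sup>+s. f1 s \<partial>lborel) * (\<integral>\<^sup>+s. f2 s \<partial>lborel) * (\<integral>\<^sup>+s. f3 s \<partial>lborel)"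
proof -
  define f where "f b = (if b = axis 1 1 then f1 else if b = axis 2 1 then f2 else f3)" for b :: "real^3"
  have "(\<integral>\<^sup>+y. (\<Prod>b\<in>Basis. ennreal (f b (y \<bullet> b))) \<partial>lborel) = (\<Prod>b\<in>Basis. (\<integral>\<^sup>+s. f b s \<partial>lborel))"
    by (rule nn_integral_lborel_prod) (auto simp: f_def)
  moreover have "(\<Prod>b\<in>Basis. ennreal (f b (y \<bullet> b))) = ennreal (f1 (y$1) * f2 (y$2) * f3 (y$3))" for y
    unfolding Basis_vec3 using axis3_distinct
    by (simp add: f_def inner_axis ennreal_mult' assms mult.assoc)
  ultimately show ?thesis
    unfolding Basis_vec3 using axis3_distinct by (simp add: f_def mult.assoc)
qed

lemma integral_mult_le_split:
  fixes k f :: "'a \<Rightarrow> real"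
  assumes "has_bochner_integral M k \<kappa>" "has_bochner_integral M f I"
    and "\<And>y. 0 \<le> k y" "\<And>y. 0 \<le> f y" "0 \<le> K" "0 \<le> D"
    and "\<And>y. y \<in> A \<Longrightarrow> f y \<le> K" "\<And>y. y \<notin> A \<Longrightarrow> k y \<le> D"
  shows "(\<integral>y. k y * f y \<partial>M) \<le> K * \<kappa> + D * I"
proof -
  have "k y * f y \<le> K * k y + D * f y" for y
  proof (cases "y \<in> A")
    case True
    then have "f y * k y \<le> K * k y"
      using assms(3,7) by (intro mult_right_mono) auto
    moreover have "0 \<le> D * f y"
      using assms(4,6) by simp
    ultimately show ?thesis
      by (simp add: mult.commute)
  next
    case False
    then have "k y * f y \<le> D * f y"
      using assms(4,8) by (intro mult_right_mono) auto
    moreover have "0 \<le> K * k y"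
      using assms(3,5) by simp
    ultimately show ?thesis
      by simp
  qed
  then have "(\<integral>y. k y * f y \<partial>M) \<le> (\<integral>y. K * k y + D * f y \<partial>M)"
    using assms(1-6) by (intro integral_mono') (auto simp: has_bochner_integral_iff)
  also have "\<dots> = K * \<kappa> + D * I"
    using assms(1,2) by (simp add: has_bochner_integral_iff)
  finally show ?thesis .
qed

lemma eventually_less_powr_at_top: "(p::real) > 0 \<Longrightarrow> \<forall>\<^sub>F t in at_top. c < t powr p"
  using real_powr_at_top[of p] unfolding filterlim_at_top_dense by blast

lemma tendsto_powr_mult_exp_neg_powr_at_top:
  assumes "k > 0" "q > 0"
  shows "((\<lambda>t::real. t powr p * exp (-k * t powr q)) \<longlongrightarrow> 0) at_top"
  using assms by real_asymp

lemma Limsup_ereal_le_of_eventually_le: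
  fixes f :: "'a \<Rightarrow> real"
  assumes "\<And>\<epsilon>. \<epsilon> > 0 \<Longrightarrow> \<forall>\<^sub>F t in F. f t \<le> c + \<epsilon>"
  shows "Limsup F (\<lambda>t. ereal (f t)) \<le> ereal c"
proof (rule ereal_le_epsilon2)
  fix \<epsilon> :: real
  assume "0 < \<epsilon>"
  have "Limsup F (\<lambda>t. ereal (f t)) \<le> ereal (c + \<epsilon>)"
    using assms[OF \<open>0 < \<epsilon>\<close>] by (intro Limsup_bounded) (auto elim: eventually_mono)
  then show "Limsup F (\<lambda>t. ereal (f t)) \<le> ereal c + ereal \<epsilon>"
    by simp
qed

section \<open>The wave packet and its density\<close>

lemma smooth_real_continuous: "smooth_real f \<Longrightarrow> continuous_on UNIV f"
  unfolding smooth_real_def continuous_on_eq_continuous_within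
  by (metis funpow_0 differentiable_imp_continuous_within differentiable_at_withinI)

lemma compact_support_vanishes:
  assumes "compact_support f"
  obtains L where "\<And>s. L < \<bar>s\<bar> \<Longrightarrow> f s = 0"
proof -
  obtain L where "\<forall>s\<in>closure {s. f s \<noteq> 0}. norm s \<le> L"
    using assms compact_imp_bounded bounded_iff unfolding compact_support_def by meson
  then show ?thesis
    using closure_subset by (intro that[of L]) force
qed

lemma continuous_compact_support_bounded:
  assumes "continuous_on UNIV f" "compact_support f"
  obtains M where "\<And>s. \<bar>f s\<bar> \<le> M"
proof -
  let ?K = "closure {s. f s \<noteq> 0}"
  have "compact (f ` ?K)"
    using assms unfolding compact_support_def by (intro compact_continuous_image continuous_on_subset[OF assms(1)]) auto
  then obtain M where "\<forall>v\<in>f ` ?K. \<bar>v\<bar> \<le> M"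
    using compact_imp_bounded bounded_iff real_norm_def by metis
  then have "\<bar>f s\<bar> \<le> max M 0" for s
    using closure_subset by (cases "f s = 0") force+
  then show ?thesis
    by (rule that)
qed

lemma psi_sq:
  assumes "B \<ge> 0"
  shows "(psi B \<sigma> \<phi> t y)\<^sup>2 = B / (2*pi) * exp (-(B/2) * (perp_norm y)\<^sup>2) * (t powr (-\<sigma>) * (\<phi> (y$3 / t powr \<sigma>))\<^sup>2)"
proof -
  have "(t powr (-\<sigma>/2))\<^sup>2 = t powr (-\<sigma>)"
    by (simp add: power2_eq_square flip: powr_add)
  moreover have "(exp (- (B/4) * v))\<^sup>2 = exp (-(B/2) * v)" for v
    by (simp add: power2_eq_square flip: exp_add)
  ultimately show ?thesis
    using assms unfolding psi_def by (simp add: power_mult_distrib)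
qed

lemma normal_density_centered:
  assumes "B > 0"
  shows "normal_density 0 (1 / sqrt B) v = sqrt (B / (2*pi)) * exp (-(B/2) * v\<^sup>2)"
  using assms by (simp add: normal_density_def power_divide real_sqrt_divide field_simps)

lemma nn_integral_psi_sq:
  assumes "B > 0" "t > 0" and [measurable]: "\<phi> \<in> borel_measurable borel"
    and \<phi>_norm: "(\<integral>\<^sup>+s. ennreal ((\<phi> s)\<^sup>2) \<partial>lborel) = 1"
  shows "(\<integral>\<^sup>+y. ennreal ((psi B \<sigma> \<phi> t y)\<^sup>2) \<partial>lborel) = 1"
proof -
  define n where "n = normal_density 0 (1 / sqrt B)"
  define h where "h s = t powr (-\<sigma>) * (\<phi> (s / t powr \<sigma>))\<^sup>2" for s
  have "n v * n w = B / (2*pi) * exp (-(B/2) * (v\<^sup>2 + w\<^sup>2))" for v w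
  proof -
    have "n v * n w = sqrt (B / (2*pi)) * sqrt (B / (2*pi)) * (exp (-(B/2) * v\<^sup>2) * exp (-(B/2) * w\<^sup>2))"
      unfolding n_def normal_density_centered[OF \<open>B > 0\<close>] by (simp only: mult_ac)
    also have "\<dots> = B / (2*pi) * exp (-(B/2) * (v\<^sup>2 + w\<^sup>2))"
      using \<open>B > 0\<close> by (simp add: distrib_left mult_exp_exp)
    finally show ?thesis .
  qed
  then have "(psi B \<sigma> \<phi> t y)\<^sup>2 = n (y$1) * n (y$2) * h (y$3)" for y
    using \<open>B > 0\<close> by (simp add: psi_sq perp_norm_def h_def)
  then have "(\<integral>\<^sup>+y. ennreal ((psi B \<sigma> \<phi> t y)\<^sup>2) \<partial>lborel)
      = (\<integral>\<^sup>+s. n s \<partial>lborel) * (\<integral>\<^sup>+s. n s \<partial>lborel) * (\<integral>\<^sup>+s. h s \<partial>lborel)"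
    by (simp only:) (rule nn_integral_vec3_prod, auto simp: n_def h_def \<open>B > 0\<close>)
  moreover have "(\<integral>\<^sup>+s. n s \<partial>lborel) = 1"
    using \<open>B > 0\<close> unfolding n_def by (subst nn_integral_eq_integral) auto
  moreover have "(\<integral>\<^sup>+s. h s \<partial>lborel) = 1"
  proof -
    have [measurable]: "h \<in> borel_measurable borel"
      unfolding h_def[abs_def] by measurable
    have "(\<integral>\<^sup>+s. h s \<partial>lborel) = ennreal \<bar>t powr \<sigma>\<bar> * (\<integral>\<^sup>+s. h (0 + t powr \<sigma> * s) \<partial>lborel)"
      by (rule nn_integral_real_affine) (measurable, use \<open>t > 0\<close> in simp)
    also have "(\<integral>\<^sup>+s. h (0 + t powr \<sigma> * s) \<partial>lborel) = (\<integral>\<^sup>+s. ennreal (t powr (-\<sigma>)) * ennreal ((\<phi> s)\<^sup>2) \<partial>lborel)"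
      using \<open>t > 0\<close> by (intro nn_integral_cong) (simp add: h_def ennreal_mult')
    also have "\<dots> = ennreal (t powr (-\<sigma>)) * (\<integral>\<^sup>+s. ennreal ((\<phi> s)\<^sup>2) \<partial>lborel)"
      by (rule nn_integral_cmult) measurable
    also have "ennreal \<bar>t powr \<sigma>\<bar> * (ennreal (t powr (-\<sigma>)) * (\<integral>\<^sup>+s. ennreal ((\<phi> s)\<^sup>2) \<partial>lborel)) = 1"
      using \<open>t > 0\<close> \<phi>_norm by (simp add: powr_minus flip: ennreal_mult)
    finally show ?thesis .
  qed
  ultimately show ?thesis
    by simp
qed

lemma delta_eq_psi_sq:
  "delta \<alpha> \<gamma> B \<sigma> \<phi> t z = t powr (2/\<alpha> + 1/\<gamma>) * (psi B \<sigma> \<phi> t (aniso_scale (t powr (1/\<alpha>)) (t powr (1/\<gamma>)) z))\<^sup>2"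
  by (simp add: delta_def)

lemma has_bochner_integral_delta_reflect:
  assumes "B > 0" "t > 0" and [measurable]: "\<phi> \<in> borel_measurable borel"
    and "(\<integral>\<^sup>+s. ennreal ((\<phi> s)\<^sup>2) \<partial>lborel) = 1"
  shows "has_bochner_integral lborel (\<lambda>y. delta \<alpha> \<gamma> B \<sigma> \<phi> t (x - y)) 1"
proof (rule has_bochner_integral_nn_integral)
  have [measurable]: "psi B \<sigma> \<phi> t \<in> borel_measurable borel"
    unfolding psi_def[abs_def] perp_norm_def by measurable
  let ?S = "aniso_scale (t powr (1/\<alpha>)) (t powr (1/\<gamma>))"
  have scale: "(t powr (1/\<alpha>))\<^sup>2 * t powr (1/\<gamma>) = t powr (2/\<alpha> + 1/\<gamma>)"
    by (simp add: power2_eq_square powr_add flip: powr_add)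
  have "(\<integral>\<^sup>+y. delta \<alpha> \<gamma> B \<sigma> \<phi> t (x - y) \<partial>lborel) = (\<integral>\<^sup>+z. delta \<alpha> \<gamma> B \<sigma> \<phi> t z \<partial>lborel)"
    by (rule nn_integral_reflect_translate) (simp add: delta_eq_psi_sq)
  also have "\<dots> = ennreal (t powr (2/\<alpha> + 1/\<gamma>)) * (\<integral>\<^sup>+z. (psi B \<sigma> \<phi> t (?S z))\<^sup>2 \<partial>lborel)"
    by (simp add: delta_eq_psi_sq ennreal_mult nn_integral_cmult)
  also have "\<dots> = (\<integral>\<^sup>+y. (psi B \<sigma> \<phi> t y)\<^sup>2 \<partial>lborel)"
    using \<open>t > 0\<close> nn_integral_aniso_scale[of "\<lambda>y. ennreal ((psi B \<sigma> \<phi> t y)\<^sup>2)" "t powr (1/\<alpha>)" "t powr (1/\<gamma>)"]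
    by (simp add: scale)
  finally show "(\<integral>\<^sup>+y. delta \<alpha> \<gamma> B \<sigma> \<phi> t (x - y) \<partial>lborel) = ennreal 1"
    using nn_integral_psi_sq[OF assms] by simp
qed (auto simp: delta_def psi_def perp_norm_def)

lemma delta_le_far:
  assumes "B > 0" "r > 0" "t > 0" "2 * L / r < t powr (1/\<gamma> - \<sigma>)" "r \<le> norm z"
    and \<phi>_bound: "\<And>s. \<bar>\<phi> s\<bar> \<le> M" and \<phi>_supp: "\<And>s. L < \<bar>s\<bar> \<Longrightarrow> \<phi> s = 0"
  shows "delta \<alpha> \<gamma> B \<sigma> \<phi> t z
    \<le> t powr (2/\<alpha> + 1/\<gamma>) * (B / (2*pi) * exp (-(B * r\<^sup>2 / 8) * t powr (2/\<alpha>)) * (t powr (-\<sigma>) * M\<^sup>2))"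
proof -
  let ?y = "aniso_scale (t powr (1/\<alpha>)) (t powr (1/\<gamma>)) z"
  have delta_z: "delta \<alpha> \<gamma> B \<sigma> \<phi> t z = t powr (2/\<alpha> + 1/\<gamma>) * (B / (2*pi)
      * exp (-(B/2) * (perp_norm ?y)\<^sup>2) * (t powr (-\<sigma>) * (\<phi> (?y$3 / t powr \<sigma>))\<^sup>2))"
    using assms(1) by (simp add: delta_eq_psi_sq psi_sq)
  show ?thesis
  proof (cases "r/2 \<le> \<bar>z$3\<bar>")
    case True
    have "L = 2 * L / r * (r/2)"
      using assms(2) by simp
    also have "\<dots> < t powr (1/\<gamma> - \<sigma>) * (r/2)"
      using assms(2,4) by (intro mult_strict_right_mono) auto
    also have "\<dots> \<le> t powr (1/\<gamma> - \<sigma>) * \<bar>z$3\<bar>"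
      using True by (intro mult_left_mono) auto
    also have "\<dots> = \<bar>?y$3 / t powr \<sigma>\<bar>"
      using assms(3) by (simp add: abs_mult powr_diff)
    finally have "\<phi> (?y$3 / t powr \<sigma>) = 0"
      by (rule \<phi>_supp)
    then show ?thesis
      using assms(1) unfolding delta_z by simp
  next
    case False
    have "r\<^sup>2 \<le> (perp_norm z)\<^sup>2 + (z$3)\<^sup>2"
      using assms(2,5) power_mono[of r "norm z" 2] by (simp add: norm_vec3 perp_norm_def)
    moreover have "(z$3)\<^sup>2 \<le> (r/2)\<^sup>2"
      using False power_mono[of "\<bar>z$3\<bar>" "r/2" 2] by simp
    ultimately have "r\<^sup>2 / 4 \<le> (perp_norm z)\<^sup>2"
      by (simp add: power_divide) (use zero_le_power2[of r] in linarith)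
    have "(t powr (1/\<alpha>))\<^sup>2 = t powr (2/\<alpha>)"
      by (simp add: power2_eq_square flip: powr_add)
    have "B * r\<^sup>2 / 8 * t powr (2/\<alpha>) = (B/2) * (t powr (2/\<alpha>) * (r\<^sup>2 / 4))"
      by simp
    also have "\<dots> \<le> (B/2) * (t powr (2/\<alpha>) * (perp_norm z)\<^sup>2)"
      using \<open>r\<^sup>2 / 4 \<le> (perp_norm z)\<^sup>2\<close> assms(1) by (intro mult_left_mono) auto
    also have "\<dots> = (B/2) * (perp_norm ?y)\<^sup>2"
      using \<open>(t powr (1/\<alpha>))\<^sup>2 = t powr (2/\<alpha>)\<close> by (simp add: perp_norm_aniso_scale power_mult_distrib)
    finally have "exp (-(B/2) * (perp_norm ?y)\<^sup>2) \<le> exp (-(B * r\<^sup>2 / 8) * t powr (2/\<alpha>))"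
      unfolding exp_le_cancel_iff by linarith
    moreover have "(\<phi> (?y$3 / t powr \<sigma>))\<^sup>2 \<le> M\<^sup>2"
      using power_mono[OF \<phi>_bound abs_ge_zero, of _ 2] by simp
    ultimately have "exp (-(B/2) * (perp_norm ?y)\<^sup>2) * (t powr (-\<sigma>) * (\<phi> (?y$3 / t powr \<sigma>))\<^sup>2)
        \<le> exp (-(B * r\<^sup>2 / 8) * t powr (2/\<alpha>)) * (t powr (-\<sigma>) * M\<^sup>2)"
      by (intro mult_mono mult_left_mono) auto
    then have "B / (2*pi) * (exp (-(B/2) * (perp_norm ?y)\<^sup>2) * (t powr (-\<sigma>) * (\<phi> (?y$3 / t powr \<sigma>))\<^sup>2))
        \<le> B / (2*pi) * (exp (-(B * r\<^sup>2 / 8) * t powr (2/\<alpha>)) * (t powr (-\<sigma>) * M\<^sup>2))"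
      using assms(1) by (intro mult_left_mono) auto
    then show ?thesis
      unfolding delta_z by (intro mult_left_mono) (simp_all add: mult.assoc)
  qed
qed

lemma eventually_delta_le_far:
  assumes "B > 0" "\<sigma> < 1/\<gamma>" "r > 0"
    and \<phi>_bound: "\<And>s. \<bar>\<phi> s\<bar> \<le> M" and \<phi>_supp: "\<And>s. L < \<bar>s\<bar> \<Longrightarrow> \<phi> s = 0"
  shows "\<forall>\<^sub>F t in at_top. \<forall>z. r \<le> norm z \<longrightarrow> delta \<alpha> \<gamma> B \<sigma> \<phi> t z
    \<le> t powr (2/\<alpha> + 1/\<gamma>) * (B / (2*pi) * exp (-(B * r\<^sup>2 / 8) * t powr (2/\<alpha>)) * (t powr (-\<sigma>) * M\<^sup>2))"
proof -
  have "1/\<gamma> - \<sigma> > 0"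
    using assms(2) by simp
  then have "\<forall>\<^sub>F t in at_top. t > 0 \<and> 2 * L / r < t powr (1/\<gamma> - \<sigma>)"
    by (intro eventually_conj eventually_gt_at_top eventually_less_powr_at_top)
  then show ?thesis
  proof (rule eventually_mono, intro allI impI)
    fix t and z :: "real^3"
    assume "t > 0 \<and> 2 * L / r < t powr (1/\<gamma> - \<sigma>)" "r \<le> norm z"
    then show "delta \<alpha> \<gamma> B \<sigma> \<phi> t z
      \<le> t powr (2/\<alpha> + 1/\<gamma>) * (B / (2*pi) * exp (-(B * r\<^sup>2 / 8) * t powr (2/\<alpha>)) * (t powr (-\<sigma>) * M\<^sup>2))"
      by (intro delta_le_far[OF assms(1,3) _ _ _ \<phi>_bound \<phi>_supp]) auto
  qed
qed

section \<open>The anisotropic weight\<close>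

lemma pnorm2_pos:
  assumes "\<beta> > 0" "p \<noteq> 0 \<or> q \<noteq> 0"
  shows "pnorm2 \<beta> p q > 0"
proof -
  have "\<bar>p\<bar> powr (2/\<beta>) + \<bar>q\<bar> powr (2/\<beta>) > 0"
    using assms(2) by (auto intro: add_pos_nonneg add_nonneg_pos)
  then show ?thesis
    unfolding pnorm2_def by simp
qed

lemma pnorm2_mult:
  assumes "\<beta> > 0"
  shows "pnorm2 \<beta> (s * p) (s * q) = \<bar>s\<bar> * pnorm2 \<beta> p q"
proof -
  have "pnorm2 \<beta> (s * p) (s * q) = (\<bar>s\<bar> powr (2/\<beta>) * (\<bar>p\<bar> powr (2/\<beta>) + \<bar>q\<bar> powr (2/\<beta>))) powr (\<beta>/2)"
    unfolding pnorm2_def by (simp add: abs_mult powr_mult distrib_left)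
  also have "\<dots> = (\<bar>s\<bar> powr (2/\<beta>)) powr (\<beta>/2) * pnorm2 \<beta> p q"
    unfolding pnorm2_def by (simp add: powr_mult)
  also have "(\<bar>s\<bar> powr (2/\<beta>)) powr (\<beta>/2) = \<bar>s\<bar>"
    using assms by (simp add: powr_powr)
  finally show ?thesis .
qed

definition aniso_weight :: "real \<Rightarrow> real \<Rightarrow> real \<Rightarrow> real^3 \<Rightarrow> real" where
  "aniso_weight \<alpha> \<beta> \<gamma> y = pnorm2 \<beta> (perp_norm y powr \<alpha>) (\<bar>y$3\<bar> powr \<gamma>)"

lemma aniso_weight_pos:
  assumes "\<beta> > 0" "y \<noteq> 0"
  shows "aniso_weight \<alpha> \<beta> \<gamma> y > 0"
proof -
  have "perp_norm y \<noteq> 0 \<or> y$3 \<noteq> 0"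
    using assms(2) by (auto simp: perp_norm_def vec_eq_iff forall_3 add_nonneg_eq_0_iff)
  then show ?thesis
    unfolding aniso_weight_def using assms(1) perp_norm_nonneg[of y] by (intro pnorm2_pos) auto
qed

lemma u_lim_eq_divide_aniso_weight:
  "u_lim g \<alpha> \<beta> \<gamma> y = g / aniso_weight \<alpha> \<beta> \<gamma> y"
proof -
  have "\<bar>perp_norm y powr \<alpha>\<bar> powr (2/\<beta>) = perp_norm y powr (2*\<alpha>/\<beta>)"
    "\<bar>\<bar>y$3\<bar> powr \<gamma>\<bar> powr (2/\<beta>) = \<bar>y$3\<bar> powr (2*\<gamma>/\<beta>)"
    by (simp_all add: powr_powr mult.commute)
  then show ?thesis
    unfolding u_lim_def aniso_weight_def pnorm2_def by (simp add: powr_minus_divide)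
qed

lemma aniso_weight_aniso_scale:
  assumes "t > 0" "\<alpha> \<noteq> 0" "\<beta> > 0" "\<gamma> \<noteq> 0"
  shows "aniso_weight \<alpha> \<beta> \<gamma> (aniso_scale (t powr (1/\<alpha>)) (t powr (1/\<gamma>)) y) = t * aniso_weight \<alpha> \<beta> \<gamma> y"
proof -
  have "perp_norm (aniso_scale (t powr (1/\<alpha>)) (t powr (1/\<gamma>)) y) powr \<alpha> = t * perp_norm y powr \<alpha>"
    using assms perp_norm_nonneg[of y] by (simp add: perp_norm_aniso_scale powr_mult powr_powr)
  moreover have "\<bar>aniso_scale (t powr (1/\<alpha>)) (t powr (1/\<gamma>)) y $ 3\<bar> powr \<gamma> = t * \<bar>y$3\<bar> powr \<gamma>"
    using assms by (simp add: abs_mult powr_mult powr_powr)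
  ultimately show ?thesis
    unfolding aniso_weight_def using assms by (simp add: pnorm2_mult)
qed

lemma isCont_aniso_weight:
  assumes "\<alpha> > 0" "\<beta> > 0" "\<gamma> > 0"
  shows "isCont (aniso_weight \<alpha> \<beta> \<gamma>) x"
  unfolding isCont_def aniso_weight_def[abs_def] pnorm2_def perp_norm_def
  using assms by (intro tendsto_powr' tendsto_intros) (auto intro!: always_eventually)

lemma scaled_lt_of_weighted_tail:
  fixes U :: "real^3 \<Rightarrow> real"
  assumes "t > 0" "\<alpha> \<noteq> 0" "\<beta> > 0" "\<gamma> \<noteq> 0" "y \<noteq> 0"
    and "R \<le> min (t powr (1/\<alpha>)) (t powr (1/\<gamma>)) * norm y"
    and tail: "\<And>z. R \<le> norm z \<Longrightarrow> aniso_weight \<alpha> \<beta> \<gamma> z * U z < c"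
  shows "t * U (aniso_scale (t powr (1/\<alpha>)) (t powr (1/\<gamma>)) y) < c / aniso_weight \<alpha> \<beta> \<gamma> y"
proof -
  let ?S = "aniso_scale (t powr (1/\<alpha>)) (t powr (1/\<gamma>))" and ?P = "aniso_weight \<alpha> \<beta> \<gamma>"
  have "R \<le> norm (?S y)"
    using assms(6) norm_aniso_scale_ge[of "t powr (1/\<alpha>)" "t powr (1/\<gamma>)" y] by simp
  then have "?P (?S y) * U (?S y) < c"
    by (rule tail)
  moreover have "?P (?S y) = t * ?P y"
    using assms(1-4) by (rule aniso_weight_aniso_scale)
  ultimately have "t * ?P y * U (?S y) < c"
    by simp
  then show ?thesis
    using aniso_weight_pos[OF assms(3,5)] by (simp add: field_simps)
qed

lemma eventually_scaled_le_near:
  fixes U :: "real^3 \<Rightarrow> real"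
  assumes "\<alpha> > 0" "\<beta> > 0" "\<gamma> > 0" "x \<noteq> 0" "\<epsilon> > 0"
    and U_lim: "((\<lambda>y. aniso_weight \<alpha> \<beta> \<gamma> y * U y) \<longlongrightarrow> g) at_infinity"
  obtains r where "r > 0" and "\<forall>\<^sub>F t in at_top. \<forall>y\<in>ball x r.
    t * U (aniso_scale (t powr (1/\<alpha>)) (t powr (1/\<gamma>)) y) < u_lim g \<alpha> \<beta> \<gamma> x + \<epsilon>"
proof -
  let ?P = "aniso_weight \<alpha> \<beta> \<gamma>"
  have Px: "?P x > 0"
    using aniso_weight_pos assms(2,4) by blast
  define \<eta> where "\<eta> = \<epsilon> * ?P x / 2"
  have "\<eta> > 0"
    using Px assms(5) by (simp add: \<eta>_def)
  have "isCont (\<lambda>y. (g + \<eta>) / ?P y) x"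
    using isCont_aniso_weight[OF assms(1-3)] Px by (auto intro!: continuous_intros)
  then obtain r1 where "r1 > 0"
    and r1: "\<And>y. dist y x < r1 \<Longrightarrow> dist ((g + \<eta>) / ?P y) ((g + \<eta>) / ?P x) < \<epsilon> / 2"
    using assms(5) unfolding continuous_at_eps_delta by (meson half_gt_zero)
  have u_lim_x: "u_lim g \<alpha> \<beta> \<gamma> x + \<epsilon> = (g + \<eta>) / ?P x + \<epsilon> / 2"
    using Px by (simp add: u_lim_eq_divide_aniso_weight \<eta>_def add_divide_distrib)
  have "\<forall>\<^sub>F z in at_infinity. ?P z * U z < g + \<eta>"
    using order_tendstoD(2)[OF U_lim] \<open>\<eta> > 0\<close> by simp
  then obtain R0 where R0: "\<And>z. R0 \<le> norm z \<Longrightarrow> ?P z * U z < g + \<eta>"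
    unfolding eventually_at_infinity by blast
  define R where "R = max R0 0"
  have "R \<ge> 0" and R: "\<And>z. R \<le> norm z \<Longrightarrow> ?P z * U z < g + \<eta>"
    using R0 by (auto simp: R_def)
  define r where "r = min r1 (norm x / 2)"
  define Q where "Q = 2 * R / norm x"
  have "\<forall>\<^sub>F t in at_top. t > 0 \<and> Q < t powr (1/\<alpha>) \<and> Q < t powr (1/\<gamma>)"
    using assms(1,3) by (intro eventually_conj eventually_gt_at_top eventually_less_powr_at_top) auto
  then have "\<forall>\<^sub>F t in at_top. \<forall>y\<in>ball x r.
    t * U (aniso_scale (t powr (1/\<alpha>)) (t powr (1/\<gamma>)) y) < u_lim g \<alpha> \<beta> \<gamma> x + \<epsilon>"
  proof (rule eventually_mono, intro ballI)
    fix t y assume t: "t > 0 \<and> Q < t powr (1/\<alpha>) \<and> Q < t powr (1/\<gamma>)" and "y \<in> ball x r"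
    then have "dist y x < r1" "norm x / 2 \<le> norm y"
      using norm_triangle_ineq2[of x y] by (auto simp: r_def dist_commute dist_norm)
    have "R = Q * (norm x / 2)"
      using assms(4) by (simp add: Q_def)
    also have "\<dots> \<le> min (t powr (1/\<alpha>)) (t powr (1/\<gamma>)) * norm y"
      using t \<open>norm x / 2 \<le> norm y\<close> \<open>R \<ge> 0\<close> by (intro mult_mono) (auto simp: Q_def)
    finally have "t * U (aniso_scale (t powr (1/\<alpha>)) (t powr (1/\<gamma>)) y) < (g + \<eta>) / ?P y"
      using t assms \<open>norm x / 2 \<le> norm y\<close> by (intro scaled_lt_of_weighted_tail R) auto
    also have "\<dots> < u_lim g \<alpha> \<beta> \<gamma> x + \<epsilon>"
      using r1[OF \<open>dist y x < r1\<close>] unfolding u_lim_x dist_real_def abs_less_iff by linarith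
    finally show "t * U (aniso_scale (t powr (1/\<alpha>)) (t powr (1/\<gamma>)) y) < u_lim g \<alpha> \<beta> \<gamma> x + \<epsilon>" .
  qed
  moreover have "r > 0"
    using \<open>r1 > 0\<close> assms(4) by (simp add: r_def)
  ultimately show ?thesis
    using that by blast
qed

lemma scaled_convolution_le_split:
  fixes U :: "real^3 \<Rightarrow> real"
  assumes "B > 0" "t > 0" "0 \<le> K" "0 \<le> D"
    and U_nonneg: "\<And>y. 0 \<le> U y" and U_int: "has_bochner_integral lborel U I"
    and \<phi>_meas: "\<phi> \<in> borel_measurable borel"
    and \<phi>_norm: "(\<integral>\<^sup>+s. ennreal ((\<phi> s)\<^sup>2) \<partial>lborel) = 1"
    and near: "\<forall>y\<in>ball x r. t * U (aniso_scale (t powr (1/\<alpha>)) (t powr (1/\<gamma>)) y) \<le> K"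
    and far: "\<forall>z. r \<le> norm z \<longrightarrow> delta \<alpha> \<gamma> B \<sigma> \<phi> t z \<le> t powr (2/\<alpha> + 1/\<gamma>) * D"
  shows "t * (\<integral>y. delta \<alpha> \<gamma> B \<sigma> \<phi> t (x - y)
    * U (aniso_scale (t powr (1/\<alpha>)) (t powr (1/\<gamma>)) y) \<partial>lborel) \<le> K + t * D * I"
proof -
  let ?S = "aniso_scale (t powr (1/\<alpha>)) (t powr (1/\<gamma>))" and ?p = "t powr (2/\<alpha> + 1/\<gamma>)"
  have "(t powr (1/\<alpha>))\<^sup>2 * \<bar>t powr (1/\<gamma>)\<bar> = ?p"
    by (simp add: power2_eq_square flip: powr_add)
  then have "has_bochner_integral lborel (\<lambda>y. U (?S y)) (I / ?p)"
    using has_bochner_integral_aniso_scale[OF U_int U_nonneg, of "t powr (1/\<alpha>)" "t powr (1/\<gamma>)"] assms(2)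
    by simp
  moreover have "has_bochner_integral lborel (\<lambda>y. delta \<alpha> \<gamma> B \<sigma> \<phi> t (x - y)) 1"
    using has_bochner_integral_delta_reflect[OF assms(1,2) \<phi>_meas \<phi>_norm] .
  ultimately have "(\<integral>y. delta \<alpha> \<gamma> B \<sigma> \<phi> t (x - y) * U (?S y) \<partial>lborel) \<le> K / t * 1 + ?p * D * (I / ?p)"
  proof (intro integral_mult_le_split[where A = "ball x r"])
    show "0 \<le> delta \<alpha> \<gamma> B \<sigma> \<phi> t z" for z
      by (simp add: delta_def)
    show "U (?S y) \<le> K / t" if "y \<in> ball x r" for y
      using near that assms(2) by (simp add: field_simps)
    show "delta \<alpha> \<gamma> B \<sigma> \<phi> t (x - y) \<le> ?p * D" if "y \<notin> ball x r" for y
      using far that by (simp add: dist_norm)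
  qed (use assms(2-4) U_nonneg in auto)
  then show ?thesis
    using assms(2) by (simp add: field_simps)
qed

lemma eventually_scaled_convolution_le:
  fixes U :: "real^3 \<Rightarrow> real" and \<phi> :: "real \<Rightarrow> real"
  assumes "B > 0" "\<alpha> > 0" "\<beta> > 0" "\<gamma> > 0" "\<sigma> < 1/\<gamma>" "x \<noteq> 0" "\<epsilon> > 0" "g \<ge> 0"
    and U_nonneg: "\<And>y. 0 \<le> U y" and U_int: "has_bochner_integral lborel U I"
    and U_lim: "((\<lambda>y. aniso_weight \<alpha> \<beta> \<gamma> y * U y) \<longlongrightarrow> g) at_infinity"
    and \<phi>_meas: "\<phi> \<in> borel_measurable borel"
    and \<phi>_norm: "(\<integral>\<^sup>+s. ennreal ((\<phi> s)\<^sup>2) \<partial>lborel) = 1"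
    and \<phi>_bound: "\<And>s. \<bar>\<phi> s\<bar> \<le> M" and \<phi>_supp: "\<And>s. L < \<bar>s\<bar> \<Longrightarrow> \<phi> s = 0"
  shows "\<forall>\<^sub>F t in at_top. t * (\<integral>y. delta \<alpha> \<gamma> B \<sigma> \<phi> t (x - y)
    * U (aniso_scale (t powr (1/\<alpha>)) (t powr (1/\<gamma>)) y) \<partial>lborel) \<le> u_lim g \<alpha> \<beta> \<gamma> x + \<epsilon>"
proof -
  let ?u = "u_lim g \<alpha> \<beta> \<gamma> x"
  have "?u \<ge> 0"
    using assms(8) by (simp add: u_lim_eq_divide_aniso_weight aniso_weight_def pnorm2_def)
  obtain r where "r > 0" and near: "\<forall>\<^sub>F t in at_top. \<forall>y\<in>ball x r.
      t * U (aniso_scale (t powr (1/\<alpha>)) (t powr (1/\<gamma>)) y) < ?u + \<epsilon>/2"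
    using eventually_scaled_le_near[OF assms(2,3,4,6) half_gt_zero[OF assms(7)] U_lim] by blast
  define E where "E t = B / (2*pi) * exp (-(B * r\<^sup>2 / 8) * t powr (2/\<alpha>)) * (t powr (-\<sigma>) * M\<^sup>2)" for t
  have far: "\<forall>\<^sub>F t in at_top. \<forall>z. r \<le> norm z \<longrightarrow> delta \<alpha> \<gamma> B \<sigma> \<phi> t z \<le> t powr (2/\<alpha> + 1/\<gamma>) * E t"
    unfolding E_def using eventually_delta_le_far[OF assms(1,5) \<open>r > 0\<close> \<phi>_bound \<phi>_supp] .
  have "((\<lambda>t. t powr (1 - \<sigma>) * exp (-(B * r\<^sup>2 / 8) * t powr (2/\<alpha>)) * (B / (2*pi) * M\<^sup>2 * I)) \<longlongrightarrow> 0) at_top"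
    using assms(1,2) \<open>r > 0\<close> by (intro tendsto_mult_left_zero tendsto_powr_mult_exp_neg_powr_at_top) auto
  then have "\<forall>\<^sub>F t in at_top. t powr (1 - \<sigma>) * exp (-(B * r\<^sup>2 / 8) * t powr (2/\<alpha>)) * (B / (2*pi) * M\<^sup>2 * I) < \<epsilon>/2"
    using assms(7) by (intro order_tendstoD) auto
  then have small: "\<forall>\<^sub>F t in at_top. t * E t * I < \<epsilon>/2"
    using eventually_gt_at_top[of 0] by eventually_elim (simp add: E_def powr_diff powr_minus field_simps)
  show ?thesis
    using eventually_gt_at_top[of 0] near far small
  proof eventually_elim
    case (elim t)
    have "t * (\<integral>y. delta \<alpha> \<gamma> B \<sigma> \<phi> t (x - y) * U (aniso_scale (t powr (1/\<alpha>)) (t powr (1/\<gamma>)) y) \<partial>lborel)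
        \<le> ?u + \<epsilon>/2 + t * E t * I"
      using elim \<open>?u \<ge> 0\<close> assms(1,7) U_nonneg
      by (intro scaled_convolution_le_split[OF _ _ _ _ _ U_int \<phi>_meas \<phi>_norm]) (auto simp: E_def less_imp_le)
    then show ?case
      using elim by simp
  qed
qed

theorem lemma1:
  fixes B g \<alpha> \<beta> \<gamma> \<sigma> :: real
    and U :: "real^3 \<Rightarrow> real"
    and \<phi> :: "real \<Rightarrow> real"
    and x :: "real^3"
  assumes "B > 0"
    and U_nonneg: "\<And>y. U y \<ge> 0"
    and U_L1: "integrable lborel U"
    and U_L2: "integrable lborel (\<lambda>y. (U y)^2)"
    and "g > 0" and "\<alpha> > 2" and "\<beta> > 0"
    and "\<alpha> / (\<alpha> - 2) < \<gamma>" and "\<gamma> < 3 * \<alpha> / (\<alpha> - 2)"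
    and U_lim: "((\<lambda>y. pnorm2 \<beta> ((perp_norm y) powr \<alpha>) (\<bar>y$3\<bar> powr \<gamma>) * U y) \<longlongrightarrow> g) at_infinity"
    and phi_smooth: "smooth_real \<phi>"
    and phi_supp: "compact_support \<phi>"
    and phi_norm: "(\<integral>s. (\<phi> s)^2 \<partial>lborel) = 1"
    and phi_center: "(\<integral>s. s * (\<phi> s)^2 \<partial>lborel) = 0"
    and "0 \<le> \<sigma>" and "\<sigma> < 1 / \<gamma>"
    and "x \<noteq> 0"
  shows "Limsup at_top (\<lambda>t. ereal (t * (\<integral>y. delta \<alpha> \<gamma> B \<sigma> \<phi> t (x - y)
            * U (aniso_scale (t powr (1/\<alpha>)) (t powr (1/\<gamma>)) y) \<partial>lborel)))
         \<le> ereal (u_lim g \<alpha> \<beta> \<gamma> x)"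
proof -
  have "\<alpha> / (\<alpha> - 2) > 0"
    using \<open>\<alpha> > 2\<close> by simp
  then have "\<gamma> > 0"
    using \<open>\<alpha> / (\<alpha> - 2) < \<gamma>\<close> by linarith
  have "continuous_on UNIV \<phi>"
    using phi_smooth by (rule smooth_real_continuous)
  then have \<phi>_meas: "\<phi> \<in> borel_measurable borel"
    by (rule borel_measurable_continuous_onI)
  obtain L where \<phi>_supp: "\<And>s. L < \<bar>s\<bar> \<Longrightarrow> \<phi> s = 0"
    using phi_supp compact_support_vanishes by blast
  obtain M where \<phi>_bound: "\<And>s. \<bar>\<phi> s\<bar> \<le> M"
    using continuous_compact_support_bounded \<open>continuous_on UNIV \<phi>\<close> phi_supp by blast
  have "integrable lborel (\<lambda>s. (\<phi> s)\<^sup>2)"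
    using phi_norm not_integrable_integral_eq by fastforce
  then have \<phi>_norm: "(\<integral>\<^sup>+s. ennreal ((\<phi> s)\<^sup>2) \<partial>lborel) = 1"
    using phi_norm by (simp add: nn_integral_eq_integral)
  have U_lim': "((\<lambda>y. aniso_weight \<alpha> \<beta> \<gamma> y * U y) \<longlongrightarrow> g) at_infinity"
    using U_lim unfolding aniso_weight_def .
  have "\<alpha> > 0" "g \<ge> 0"
    using \<open>\<alpha> > 2\<close> \<open>g > 0\<close> by simp_all
  note estimate = eventually_scaled_convolution_le[OF \<open>B > 0\<close> \<open>\<alpha> > 0\<close> \<open>\<beta> > 0\<close> \<open>\<gamma> > 0\<close>
      \<open>\<sigma> < 1/\<gamma>\<close> \<open>x \<noteq> 0\<close> _ \<open>g \<ge> 0\<close> U_nonneg has_bochner_integral_integrable[OF U_L1] U_lim'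
      \<phi>_meas \<phi>_norm \<phi>_bound \<phi>_supp]
  show ?thesis
    by (rule Limsup_ereal_le_of_eventually_le) (rule estimate)
qed

end
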